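(* Let $A\in\mathbb{R}^{n\times n}$ be symmetric with spectrum contained in $[0,1]$, let $\bm{v}\in\mathbb{R}^n$ with $\|\bm{v}\|=1$, let $m\ge2$ and suppose $m$ Lanczos steps for $A$ and $\bm{v}$ give $V_m,\bm{v}_{m+1},H_m,h_{m+1,m}$. Let $\bm{y}_m(t)=V_m\big(\sin(t\sqrt{H_m})\,(\sqrt{H_m})^{-1}\big)\bm{e}_1$ (i.e. $V_m\,t\sigma(t^2H_m)\bm{e}_1$) and $\bm{r}_m(t)=-A\bm{y}_m(t)-\bm{y}_m''(t)$. Then for $0\le t\le1$, $$\|\bm{r}_m(t)\|\le16\,\frac{(t/2)^{2m-1}}{(2m-1)!}.$$
   Context: Lanczos: $V_m$ has orthonormal columns with first column $\bm{v}$, $\bm{v}_{m+1}$ is a unit vector orthogonal to them, $H_m=V_m^TAV_m$ is symmetric tridiagonal, $h_{m+1,m}\ge0$, and $AV_m=V_mH_m+h_{m+1,m}\bm{v}_{m+1}\bm{e}_m^T$. $\sigma$ is the entire function with $\sigma(x^2)=\sin x/x$, $\sigma(0)=1$. Norms are Euclidean. *)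

theory Defs
  imports "HOL-Analysis.Analysis"
begin

definition mpow :: "real^'m^'m \<Rightarrow> nat \<Rightarrow> real^'m^'m" where
  "mpow H k = (((**) H) ^^ k) (mat 1)"

definition is_eigenvalue :: "real^'n^'n \<Rightarrow> real \<Rightarrow> bool" where
  "is_eigenvalue A l \<longleftrightarrow> (\<exists>x. x \<noteq> 0 \<and> A *v x = l *\<^sub>R x)"

text \<open>The matrix function sigma(X) for the entire function sigma with
  sigma(x^2) = sin x / x, i.e. sigma(z) = sum_k (-1)^k z^k / (2k+1)!,
  evaluated by its (everywhere convergent) power series.\<close>
definition mat_sigma :: "real^'m^'m \<Rightarrow> real^'m^'m" where
  "mat_sigma X = (\<Sum>k. ((-1)^k / fact (2*k+1)) *\<^sub>R mpow X k)"

definition first_idx :: "'m::{finite,linorder}" where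
  "first_idx = Min UNIV"
definition last_idx :: "'m::{finite,linorder}" where
  "last_idx = Max UNIV"

definition tridiagonal :: "real^('m::{finite,linorder})^('m::{finite,linorder}) \<Rightarrow> bool" where
  "tridiagonal H \<longleftrightarrow> (\<forall>i j. (\<exists>k. i < k \<and> k < j) \<longrightarrow> H$i$j = 0 \<and> H$j$i = 0)"

text \<open>Outer product u e_m^T (n x m matrix).\<close>
definition outer_last :: "real^'n \<Rightarrow> real^('m::{finite,linorder})^('n::finite)" where
  "outer_last u = (\<chi> i j. if j = last_idx then u$i else 0)"

end

theory Submission
  imports Defs "HOL-Computational_Algebra.Polynomial"
begin

text \<open>
  Diagonalise H in an orthonormal eigenbasis. The Lanczos relation turns A V b into mu_b V b plus
  a multiple of w, so the residual is r(t) = -h c(t) w with c(t) = e_m^T t sigma(t^2 H) e_1, and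
  h <= norm A <= 1. Expanding sigma, c(t) = sum_k (-1)^k t^(2k+1) / (2k+1)! (H^k)_(m,1). As H is
  tridiagonal, p(H)_(m,1) = 0 whenever deg p < m - 1. Writing
  mu^k = 4^-k sum_i (2k choose i) T_|k-i|(2 mu - 1) in Chebyshev polynomials, only the terms with
  |k - i| >= m - 1 survive in (H^k)_(m,1), each contributing at most (2k choose i) because the
  spectrum of H lies in [0,1]. These extreme binomial coefficients are small enough that the
  series is dominated by a geometric one with leading term (t/2)^(2m-1) / (2m-1)!.
\<close>

section \<open>Spectral theorem for real symmetric matrices\<close>

lemma inner_matrix_vector_transpose:
  fixes M :: "real^'n^'m"
  shows "(M *v x) \<bullet> y = x \<bullet> (transpose M *v y)"
  by (metis dot_lmul_matrix vector_transpose_matrix)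

lemma quadratic_nonpos_imp_linear_coeff_zero:
  fixes a c :: real
  assumes "a \<ge> 0" and "\<And>e. e > 0 \<Longrightarrow> 2*e*a + e^2*c \<le> 0"
  shows "a = 0"
proof -
  define e where "e = a / (\<bar>c\<bar> + 1)"
  show ?thesis
  proof (rule ccontr)
    assume "a \<noteq> 0"
    then have "e > 0" using assms(1) by (simp add: e_def)
    then have "e * (2*a + e*c) \<le> 0"
      using assms(2)[of e] by (simp add: power2_eq_square algebra_simps)
    then have "2*a + e*c \<le> 0" using \<open>e > 0\<close> by (simp add: mult_le_0_iff)
    moreover have "- (e*c) \<le> e * \<bar>c\<bar>" using \<open>e > 0\<close> by (simp add: abs_if)
    moreover have "e * \<bar>c\<bar> < a" using \<open>a \<noteq> 0\<close> assms(1) by (simp add: e_def field_simps)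
    ultimately show False using assms(1) by linarith
  qed
qed

lemma rayleigh_quotient_attains_max_on_subspace:
  fixes M :: "real^'k^'k"
  assumes S: "subspace S" and z: "z \<in> S" "z \<noteq> 0"
  obtains x where "x \<in> S" "x \<bullet> x = 1" "\<And>u. u \<in> S \<Longrightarrow> u \<bullet> (M *v u) \<le> (x \<bullet> (M *v x)) * (u \<bullet> u)"
proof -
  define q where "q u = u \<bullet> (M *v u)" for u
  define K where "K = sphere 0 1 \<inter> S"
  have "compact K"
    unfolding K_def by (intro compact_Int_closed compact_sphere closed_subspace S)
  moreover have "(1 / norm z) *\<^sub>R z \<in> K"
    using z S by (simp add: K_def subspace_scale)
  moreover have "continuous_on K q"
    unfolding q_def by (intro continuous_intros linear_continuous_on
        linear_conv_bounded_linear[THEN iffD1] matrix_vector_mul_linear)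
  ultimately obtain x where xK: "x \<in> K" and xmax: "\<And>u. u \<in> K \<Longrightarrow> q u \<le> q x"
    using continuous_attains_sup by (metis empty_iff)
  have "q u \<le> q x * (u \<bullet> u)" if "u \<in> S" for u
  proof (cases "u = 0")
    case False
    have "(1 / norm u) *\<^sub>R u \<in> K"
      using that False S by (simp add: K_def subspace_scale)
    moreover have "q ((1 / norm u) *\<^sub>R u) = q u / (norm u)^2"
      by (simp add: q_def matrix_vector_mult_scaleR power2_eq_square)
    ultimately have "q u / (norm u)^2 \<le> q x"
      using xmax by metis
    then show ?thesis
      using False by (simp add: divide_le_eq power2_norm_eq_inner)
  qed (simp add: q_def)
  with xK show ?thesis
    by (intro that[of x]) (auto simp: K_def q_def norm_eq_1)
qed

text \<open>A maximiser of the Rayleigh quotient on the unit sphere of \<open>S\<close> is an eigenvector.\<close>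

lemma symmetric_matrix_unit_eigenvector_in_invariant_subspace:
  fixes M :: "real^'k^'k"
  assumes sym: "transpose M = M" and S: "subspace S" and inv: "\<And>x. x \<in> S \<Longrightarrow> M *v x \<in> S"
    and z: "z \<in> S" "z \<noteq> 0"
  obtains x where "x \<in> S" "norm x = 1" "M *v x = (x \<bullet> (M *v x)) *\<^sub>R x"
proof -
  define q where "q u = u \<bullet> (M *v u)" for u
  obtain x where xS: "x \<in> S" and xx: "x \<bullet> x = 1" and rayleigh: "\<And>u. u \<in> S \<Longrightarrow> q u \<le> q x * (u \<bullet> u)"
    using rayleigh_quotient_attains_max_on_subspace[OF S z] unfolding q_def by blast
  define d where "d = M *v x - q x *\<^sub>R x"
  have dS: "d \<in> S"
    unfolding d_def using xS by (intro subspace_diff subspace_scale S inv)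
  have xd: "x \<bullet> d = 0"
    using xx by (simp add: d_def q_def inner_diff_right)
  have dMx: "d \<bullet> (M *v x) = d \<bullet> d"
    using xd by (simp add: d_def inner_diff_right inner_commute)
  have "d \<bullet> d = 0"
  proof (rule quadratic_nonpos_imp_linear_coeff_zero)
    fix e :: real
    have "x \<bullet> (M *v d) = d \<bullet> (M *v x)"
      by (metis inner_commute inner_matrix_vector_transpose sym)
    then have "q (x + e *\<^sub>R d) = q x + 2*e*(d \<bullet> d) + e^2 * q d"
      using dMx by (simp add: q_def matrix_vector_right_distrib matrix_vector_mult_scaleR
          inner_add_left inner_add_right algebra_simps power2_eq_square)
    moreover have "(x + e *\<^sub>R d) \<bullet> (x + e *\<^sub>R d) = 1 + e^2 * (d \<bullet> d)"
      using xx xd by (simp add: inner_add_left inner_add_right inner_commute power2_eq_square)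
    moreover have "x + e *\<^sub>R d \<in> S"
      using xS dS S by (simp add: subspace_add subspace_scale)
    ultimately show "2*e*(d \<bullet> d) + e^2 * (q d - q x * (d \<bullet> d)) \<le> 0"
      using rayleigh[of "x + e *\<^sub>R d"] by (simp add: algebra_simps)
  qed simp
  then have "M *v x = q x *\<^sub>R x"
    by (simp add: d_def)
  then show ?thesis
    using that xS xx by (simp add: q_def norm_eq_1)
qed

lemma symmetric_matrix_eigenvector_orthogonal_invariant:
  fixes M :: "real^'k^'k"
  assumes "transpose M = M" "M *v x = c *\<^sub>R x" "x \<bullet> y = 0"
  shows "x \<bullet> (M *v y) = 0"
proof -
  have "x \<bullet> (M *v y) = (M *v x) \<bullet> y"
    using assms(1) by (simp add: inner_matrix_vector_transpose)
  then show ?thesis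
    using assms(2,3) by simp
qed

lemma symmetric_matrix_invariant_subspace_eigenbasis:
  fixes M :: "real^'k^'k"
  assumes sym: "transpose M = M"
  shows "subspace S \<Longrightarrow> (\<And>x. x \<in> S \<Longrightarrow> M *v x \<in> S) \<Longrightarrow>
    \<exists>B. B \<subseteq> S \<and> pairwise orthogonal B \<and> S \<subseteq> span B \<and>
        (\<forall>b\<in>B. norm b = 1 \<and> M *v b = (b \<bullet> (M *v b)) *\<^sub>R b)"
proof (induction "dim S" arbitrary: S rule: less_induct)
  case less
  show ?case
  proof (cases "S \<subseteq> {0}")
    case True
    then show ?thesis by (intro exI[of _ "{}"]) auto
  next
    case False
    then obtain z where "z \<in> S" "z \<noteq> 0" by auto
    with sym less.prems obtain x where x: "x \<in> S" "norm x = 1" "M *v x = (x \<bullet> (M *v x)) *\<^sub>R x"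
      by (metis symmetric_matrix_unit_eigenvector_in_invariant_subspace)
    have xx: "x \<bullet> x = 1"
      using x(2) by (simp add: norm_eq_1)
    define S' where "S' = S \<inter> {y. x \<bullet> y = 0}"
    have S': "subspace S'"
      unfolding S'_def by (intro subspace_inter less.prems(1) subspace_hyperplane)
    have "M *v y \<in> S'" if "y \<in> S'" for y
      using that less.prems(2) symmetric_matrix_eigenvector_orthogonal_invariant[OF sym x(3)]
      by (simp add: S'_def)
    moreover have "dim S' < dim S"
    proof (rule dim_psubset)
      have "S' \<subseteq> S" "x \<in> S - S'"
        using x(1) xx by (auto simp: S'_def)
      then show "span S' \<subset> span S"
        by (metis Diff_iff S' less.prems(1) psubsetI span_eq_iff)
    qed
    ultimately obtain B' where B': "B' \<subseteq> S'" "pairwise orthogonal B'" "S' \<subseteq> span B'"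
        "\<forall>b\<in>B'. norm b = 1 \<and> M *v b = (b \<bullet> (M *v b)) *\<^sub>R b"
      using less.hyps S' by blast
    have "S \<subseteq> span (insert x B')"
    proof
      fix y assume "y \<in> S"
      then have "y - (x \<bullet> y) *\<^sub>R x \<in> S'"
        using x(1) xx less.prems(1) by (simp add: S'_def subspace_diff subspace_scale inner_diff_right)
      then have "y - (x \<bullet> y) *\<^sub>R x \<in> span (insert x B')"
        using B'(3) span_mono[of B' "insert x B'"] by auto
      then show "y \<in> span (insert x B')"
        by (metis diff_add_cancel insertI1 span_add span_base span_scale)
    qed
    moreover have "pairwise orthogonal (insert x B')"
      using B'(1,2) by (auto simp: pairwise_insert S'_def orthogonal_def inner_commute)
    ultimately show ?thesis
      using B' x by (intro exI[of _ "insert x B'"]) (auto simp: S'_def)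
  qed
qed

definition orthonormal_eigenbasis :: "real^'k^'k \<Rightarrow> (real^'k) set \<Rightarrow> (real^'k \<Rightarrow> real) \<Rightarrow> bool"
  where "orthonormal_eigenbasis M B \<mu> \<longleftrightarrow> finite B \<and> pairwise orthogonal B \<and>
    (\<forall>b\<in>B. norm b = 1 \<and> M *v b = \<mu> b *\<^sub>R b) \<and> (\<forall>x. x = (\<Sum>b\<in>B. (x \<bullet> b) *\<^sub>R b))"

lemma symmetric_matrix_orthonormal_eigenbasis:
  fixes M :: "real^'k^'k"
  assumes "transpose M = M"
  obtains B \<mu> where "orthonormal_eigenbasis M B \<mu>"
proof -
  obtain B where B: "pairwise orthogonal B" "UNIV \<subseteq> span B"
      "\<forall>b\<in>B. norm b = 1 \<and> M *v b = (b \<bullet> (M *v b)) *\<^sub>R b"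
    using symmetric_matrix_invariant_subspace_eigenbasis[OF assms, of UNIV] by auto
  have "0 \<notin> B"
    using B(3) by force
  then have fin: "finite B"
    using B(1) pairwise_orthogonal_independent finiteI_independent by blast
  have "x = (\<Sum>b\<in>B. (x \<bullet> b) *\<^sub>R b)" for x
  proof -
    define z where "z = x - (\<Sum>b\<in>B. (x \<bullet> b) *\<^sub>R b)"
    have "z \<bullet> c = 0" if "c \<in> B" for c
    proof -
      have "(\<Sum>b\<in>B. (x \<bullet> b) * (b \<bullet> c)) = (\<Sum>b\<in>B. if b = c then x \<bullet> c else 0)"
        using B(1,3) that by (intro sum.cong) (auto simp: pairwise_def orthogonal_def norm_eq_1)
      then show ?thesis
        using fin that by (simp add: z_def inner_diff_left inner_sum_left)
    qed
    then have "z \<bullet> z = 0"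
      using B(2) orthogonal_to_span by (metis UNIV_I orthogonal_def subset_iff)
    then show ?thesis
      by (simp add: z_def)
  qed
  with fin B show ?thesis
    by (intro that[of B "\<lambda>b. b \<bullet> (M *v b)"]) (simp add: orthonormal_eigenbasis_def)
qed

lemma orthonormal_eigenbasis_inner:
  assumes "orthonormal_eigenbasis M B \<mu>"
  shows "x \<bullet> y = (\<Sum>b\<in>B. (x \<bullet> b) * (y \<bullet> b))"
proof -
  have "x \<bullet> y = (\<Sum>b\<in>B. (x \<bullet> b) *\<^sub>R b) \<bullet> y"
    using assms unfolding orthonormal_eigenbasis_def by metis
  also have "\<dots> = (\<Sum>b\<in>B. (x \<bullet> b) * (b \<bullet> y))"
    by (simp add: inner_sum_left)
  finally show ?thesis
    by (simp add: inner_commute)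
qed

lemma orthonormal_eigenbasis_inner_eigenvector:
  assumes "orthonormal_eigenbasis M B \<mu>" "transpose M = M" "b \<in> B"
  shows "(M *v x) \<bullet> b = \<mu> b * (x \<bullet> b)"
  using assms by (simp add: inner_matrix_vector_transpose orthonormal_eigenbasis_def)

lemma unit_interval_spectrum_bounds:
  fixes A :: "real^'n^'n"
  assumes sym: "transpose A = A" and spec: "\<And>l. is_eigenvalue A l \<Longrightarrow> 0 \<le> l \<and> l \<le> 1"
  shows "0 \<le> x \<bullet> (A *v x)" "x \<bullet> (A *v x) \<le> x \<bullet> x" "norm (A *v x) \<le> norm x"
proof -
  obtain B \<mu> where B: "orthonormal_eigenbasis A B \<mu>"
    using symmetric_matrix_orthonormal_eigenbasis sym by blast
  have \<mu>: "0 \<le> \<mu> b \<and> \<mu> b \<le> 1" if "b \<in> B" for b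
  proof (rule spec)
    show "is_eigenvalue A (\<mu> b)"
      unfolding is_eigenvalue_def using B that
      by (intro exI[of _ b]) (auto simp: orthonormal_eigenbasis_def)
  qed
  have Ab: "(A *v x) \<bullet> b = \<mu> b * (x \<bullet> b)" if "b \<in> B" for x b
    using orthonormal_eigenbasis_inner_eigenvector[OF B sym that] .
  have xx: "x \<bullet> x = (\<Sum>b\<in>B. (x \<bullet> b)^2)"
    using orthonormal_eigenbasis_inner[OF B, of x x] by (simp add: power2_eq_square)
  have xAx: "x \<bullet> (A *v x) = (\<Sum>b\<in>B. \<mu> b * (x \<bullet> b)^2)"
    unfolding orthonormal_eigenbasis_inner[OF B, of x "A *v x"]
    by (intro sum.cong refl) (simp add: Ab power2_eq_square)
  have AxAx: "(A *v x) \<bullet> (A *v x) = (\<Sum>b\<in>B. (\<mu> b)^2 * (x \<bullet> b)^2)"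
    unfolding orthonormal_eigenbasis_inner[OF B, of "A *v x" "A *v x"]
    by (intro sum.cong refl) (simp add: Ab power2_eq_square)
  show "0 \<le> x \<bullet> (A *v x)"
    unfolding xAx using \<mu> by (intro sum_nonneg) simp
  show "x \<bullet> (A *v x) \<le> x \<bullet> x"
    unfolding xAx xx using \<mu> by (intro sum_mono) (simp add: mult_left_le_one_le)
  have "(A *v x) \<bullet> (A *v x) \<le> x \<bullet> x"
    unfolding AxAx xx using \<mu> by (intro sum_mono mult_left_le_one_le) (auto simp: power_le_one)
  then show "norm (A *v x) \<le> norm x"
    by (simp add: norm_eq_sqrt_inner)
qed

section \<open>Powers and power series of a symmetric matrix\<close>

lemma mpow_0 [simp]: "mpow M 0 = mat 1"
  by (simp add: mpow_def)

lemma mpow_Suc: "mpow M (Suc k) = M ** mpow M k"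
  by (simp add: mpow_def)

lemma mpow_scaleR: "mpow (c *\<^sub>R M) k = c^k *\<^sub>R mpow M k"
  by (induction k) (simp_all add: mpow_Suc matrix_scalar_ac scalar_matrix_assoc[symmetric])

lemma mpow_eigenvector: "M *v b = \<mu> *\<^sub>R b \<Longrightarrow> mpow M k *v b = \<mu>^k *\<^sub>R b"
  by (induction k) (simp_all add: mpow_Suc matrix_vector_mul_assoc[symmetric] matrix_vector_mult_scaleR)

lemma sum_matrix_vector_mult: "finite S \<Longrightarrow> (\<Sum>b\<in>S. M b) *v x = (\<Sum>b\<in>S. M b *v x)"
  by (induction rule: finite_induct) (simp_all add: matrix_vector_mult_add_rdistrib)

definition outer_prod :: "real^'k \<Rightarrow> real^'k^'k" where
  "outer_prod b = (\<chi> i j. b$i * b$j)"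

lemma outer_prod_mult_vector: "outer_prod b *v x = (b \<bullet> x) *\<^sub>R b"
  by (simp add: vec_eq_iff outer_prod_def matrix_vector_mult_def inner_vec_def
      sum_distrib_left ac_simps)

lemma mpow_orthonormal_eigenbasis:
  assumes B: "orthonormal_eigenbasis M B \<mu>"
  shows "mpow M k = (\<Sum>b\<in>B. \<mu> b ^ k *\<^sub>R outer_prod b)"
proof (rule matrix_eq[THEN iffD2], rule allI)
  fix x
  have fin: "finite B" and eig: "\<And>b. b \<in> B \<Longrightarrow> M *v b = \<mu> b *\<^sub>R b"
    and x: "x = (\<Sum>b\<in>B. (x \<bullet> b) *\<^sub>R b)"
    using B by (auto simp: orthonormal_eigenbasis_def)
  have "mpow M k *v x = (\<Sum>b\<in>B. (x \<bullet> b) *\<^sub>R (\<mu> b ^ k *\<^sub>R b))"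
    by (subst x) (simp add: vec.sum matrix_vector_mult_scaleR mpow_eigenvector[OF eig] cong: sum.cong)
  also have "\<dots> = (\<Sum>b\<in>B. \<mu> b ^ k *\<^sub>R outer_prod b) *v x"
    by (simp add: sum_matrix_vector_mult[OF fin] outer_prod_mult_vector inner_commute mult.commute
        flip: scaleR_matrix_vector_assoc)
  finally show "mpow M k *v x = (\<Sum>b\<in>B. \<mu> b ^ k *\<^sub>R outer_prod b) *v x" .
qed

lemma mpow_entry_orthonormal_eigenbasis:
  assumes "orthonormal_eigenbasis M B \<mu>"
  shows "mpow M k $ i $ j = (\<Sum>b\<in>B. b$i * b$j * \<mu> b ^ k)"
  by (simp add: mpow_orthonormal_eigenbasis[OF assms] sum_component outer_prod_def ac_simps)

lemma orthonormal_eigenbasis_entry_poly: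
  assumes "orthonormal_eigenbasis M B \<mu>"
  shows "(\<Sum>b\<in>B. b$i * b$j * poly p (\<mu> b)) = (\<Sum>n\<le>degree p. coeff p n * mpow M n $ i $ j)"
  by (simp add: poly_altdef mpow_entry_orthonormal_eigenbasis[OF assms] sum_distrib_left
      sum_distrib_right ac_simps sum.swap[of _ B])

lemma abs_orthonormal_eigenbasis_entry_sum_le_1:
  assumes B: "orthonormal_eigenbasis M B \<mu>" and f: "\<And>b. b \<in> B \<Longrightarrow> \<bar>f b\<bar> \<le> 1"
  shows "\<bar>\<Sum>b\<in>B. b$i * b$j * f b\<bar> \<le> 1"
proof -
  have sq: "(\<Sum>b\<in>B. (b$i)^2) = 1" for i
    using orthonormal_eigenbasis_inner[OF B, of "axis i 1" "axis i 1"]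
    by (simp add: inner_axis' power2_eq_square)
  have "\<bar>\<Sum>b\<in>B. b$i * b$j * f b\<bar> \<le> (\<Sum>b\<in>B. \<bar>b$i * b$j\<bar>)"
    using f by (intro order_trans[OF sum_abs] sum_mono) (simp add: abs_mult mult_right_le_one_le)
  also have "\<dots> \<le> (\<Sum>b\<in>B. ((b$i)^2 + (b$j)^2) / 2)"
  proof (intro sum_mono)
    fix b :: "real^'a"
    have "0 \<le> (\<bar>b$i\<bar> - \<bar>b$j\<bar>)^2"
      by simp
    then show "\<bar>b$i * b$j\<bar> \<le> ((b$i)^2 + (b$j)^2) / 2"
      by (simp add: abs_mult power2_eq_square algebra_simps)
  qed
  also have "\<dots> = 1"
    using sq[of i] sq[of j] by (simp add: sum.distrib flip: sum_divide_distrib)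
  finally show ?thesis .
qed

lemma sums_mpow_orthonormal_eigenbasis:
  assumes B: "orthonormal_eigenbasis M B \<mu>" and g: "\<And>b. b \<in> B \<Longrightarrow> (\<lambda>k. c k * \<mu> b ^ k) sums g b"
  shows "(\<lambda>k. c k *\<^sub>R mpow M k) sums (\<Sum>b\<in>B. g b *\<^sub>R outer_prod b)"
proof -
  have "(\<lambda>k. \<Sum>b\<in>B. (c k * \<mu> b ^ k) *\<^sub>R outer_prod b) sums (\<Sum>b\<in>B. g b *\<^sub>R outer_prod b)"
    by (intro sums_sum sums_scaleR_left g)
  then show ?thesis
    by (simp add: mpow_orthonormal_eigenbasis[OF B] scaleR_sum_right)
qed

text \<open>\<open>sin_sqrt \<mu> t\<close> is the scalar function \<open>t \<sigma>(t\<^sup>2 \<mu>)\<close> for \<open>\<mu> \<ge> 0\<close>.\<close>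

definition sin_sqrt :: "real \<Rightarrow> real \<Rightarrow> real" where
  "sin_sqrt \<mu> t = (if \<mu> = 0 then t else sin (t * sqrt \<mu>) / sqrt \<mu>)"

lemma sin_sqrt_sums:
  assumes "\<mu> \<ge> 0"
  shows "(\<lambda>k. (-1)^k / fact (2*k+1) * t^(2*k+1) * \<mu>^k) sums sin_sqrt \<mu> t"
proof (cases "\<mu> = 0")
  case True
  then show ?thesis
    using powser_sums_zero[of "\<lambda>k. (-1)^k / fact (2*k+1) * t^(2*k+1)"]
    by (simp add: sin_sqrt_def)
next
  case False
  then have "sqrt \<mu> \<noteq> 0"
    using assms by simp
  then have "(\<lambda>k. (-1)^k / fact (2*k+1) * t^(2*k+1) * \<mu>^k) =
      (\<lambda>k. (-1)^k / fact (2*k+1) * (t * sqrt \<mu>)^(2*k+1) / sqrt \<mu>)"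
    using assms by (simp add: power_mult_distrib power_add power_mult mult.assoc)
  then show ?thesis
    using sums_divide[OF sin_paired, of "t * sqrt \<mu>" "sqrt \<mu>"] False by (simp add: sin_sqrt_def)
qed

lemma has_real_derivative_sin_sqrt:
  "\<mu> \<ge> 0 \<Longrightarrow> (sin_sqrt \<mu> has_real_derivative cos (t * sqrt \<mu>)) (at t)"
  unfolding sin_sqrt_def by (cases "\<mu> = 0") (auto intro!: derivative_eq_intros simp: mult.assoc)

lemma has_real_derivative_cos_sqrt:
  assumes "\<mu> \<ge> 0"
  shows "((\<lambda>t. cos (t * sqrt \<mu>)) has_real_derivative - \<mu> * sin_sqrt \<mu> t) (at t)"
proof -
  have "- sin (t * sqrt \<mu>) * sqrt \<mu> = - \<mu> * sin_sqrt \<mu> t"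
    using assms by (cases "\<mu> = 0") (auto simp: sin_sqrt_def field_simps)
  then show ?thesis
    by (auto intro!: derivative_eq_intros)
qed

lemma scaled_mat_sigma_orthonormal_eigenbasis:
  assumes B: "orthonormal_eigenbasis H B \<mu>" and \<mu>: "\<And>b. b \<in> B \<Longrightarrow> \<mu> b \<ge> 0"
  shows "t *\<^sub>R mat_sigma (t^2 *\<^sub>R H) = (\<Sum>b\<in>B. sin_sqrt (\<mu> b) t *\<^sub>R outer_prod b)"
    (is "_ = ?S")
proof (cases "t = 0")
  case True
  have "sin_sqrt (\<mu> b) 0 = 0" for b
    by (simp add: sin_sqrt_def)
  with True show ?thesis
    by simp
next
  case False
  have "(\<lambda>k. ((-1)^k / fact (2*k+1) * t^(2*k+1)) *\<^sub>R mpow H k) sums ?S"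
    using B by (rule sums_mpow_orthonormal_eigenbasis) (rule sin_sqrt_sums[OF \<mu>])
  then have "(\<lambda>k. inverse t *\<^sub>R ((-1)^k / fact (2*k+1) * t^(2*k+1)) *\<^sub>R mpow H k)
      sums (inverse t *\<^sub>R ?S)"
    by (rule sums_scaleR_right)
  moreover have "inverse t *\<^sub>R ((-1)^k / fact (2*k+1) * t^(2*k+1)) *\<^sub>R mpow H k =
      ((-1)^k / fact (2*k+1)) *\<^sub>R mpow (t^2 *\<^sub>R H) k" for k
    using False by (simp add: mpow_scaleR power_mult)
  ultimately have "mat_sigma (t^2 *\<^sub>R H) = inverse t *\<^sub>R ?S"
    by (simp add: mat_sigma_def sums_iff)
  then show ?thesis
    using False by simp
qed

lemma sin_sqrt_entry_sums:
  assumes B: "orthonormal_eigenbasis H B \<mu>" and \<mu>: "\<And>b. b \<in> B \<Longrightarrow> 0 \<le> \<mu> b"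
  shows "(\<lambda>k. (-1)^k / fact (2*k+1) * t^(2*k+1) * mpow H k $ i $ j)
    sums (\<Sum>b\<in>B. b$i * b$j * sin_sqrt (\<mu> b) t)"
proof -
  have "(\<lambda>k. \<Sum>b\<in>B. b$i * b$j * ((-1)^k / fact (2*k+1) * t^(2*k+1) * \<mu> b ^ k))
      sums (\<Sum>b\<in>B. b$i * b$j * sin_sqrt (\<mu> b) t)"
    by (intro sums_sum sums_mult sin_sqrt_sums \<mu>)
  then show ?thesis
    by (simp add: mpow_entry_orthonormal_eigenbasis[OF B] sum_distrib_left sum_divide_distrib ac_simps)
qed

section \<open>Chebyshev expansion of powers\<close>

fun cheb_poly :: "nat \<Rightarrow> real poly" where
  "cheb_poly 0 = 1"
| "cheb_poly (Suc 0) = [:0, 1:]"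
| "cheb_poly (Suc (Suc n)) = [:0, 2:] * cheb_poly (Suc n) - cheb_poly n"

lemma poly_cheb_poly_cos: "poly (cheb_poly n) (cos \<theta>) = cos (real n * \<theta>)"
proof (induction n rule: cheb_poly.induct)
  case (3 n)
  have "cos (real (Suc (Suc n)) * \<theta>) + cos (real n * \<theta>) = 2 * cos \<theta> * cos (real (Suc n) * \<theta>)"
    using cos_add[of "real (Suc n) * \<theta>" \<theta>] cos_diff[of "real (Suc n) * \<theta>" \<theta>]
    by (simp add: algebra_simps)
  then show ?case
    using 3 by (simp add: algebra_simps)
qed simp_all

lemma degree_cheb_poly_le: "degree (cheb_poly n) \<le> n"
proof (induction n rule: cheb_poly.induct)
  case (3 n)
  have "degree ([:0, 2:] * cheb_poly (Suc n)) \<le> Suc (Suc n)"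
    using degree_mult_le[of "[:0, 2:]" "cheb_poly (Suc n)"] 3(1) by simp
  then show ?case
    using 3(2) by (simp add: degree_diff_le)
qed simp_all

lemma abs_poly_cheb_poly_le_1:
  assumes "\<bar>x\<bar> \<le> 1"
  shows "\<bar>poly (cheb_poly n) x\<bar> \<le> 1"
proof -
  have "x = cos (arccos x)"
    using assms by simp
  then show ?thesis
    by (metis abs_cos_le_one poly_cheb_poly_cos)
qed

lemma two_cos_power:
  "(2 * cos \<phi>)^n = (\<Sum>i\<le>n. real (n choose i) * cos ((2 * real i - real n) * \<phi>))"
proof -
  have "complex_of_real ((2 * cos \<phi>)^n) = (cis \<phi> + cis (- \<phi>))^n"
    by (simp add: complex_eq_iff cis.sel flip: of_real_power)
  also have "\<dots> = (\<Sum>i\<le>n. of_nat (n choose i) * cis \<phi> ^ i * cis (- \<phi>) ^ (n - i))"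
    by (rule binomial_ring)
  also have "\<dots> = (\<Sum>i\<le>n. of_nat (n choose i) * cis ((2 * real i - real n) * \<phi>))"
  proof (intro sum.cong refl)
    fix i assume "i \<in> {..n}"
    then have "real i * \<phi> + real (n - i) * - \<phi> = (2 * real i - real n) * \<phi>"
      by (simp add: of_nat_diff algebra_simps)
    moreover have "cis \<phi> ^ i * cis (- \<phi>) ^ (n - i) = cis (real i * \<phi> + real (n - i) * - \<phi>)"
      by (simp only: Complex.DeMoivre cis_mult)
    ultimately show "of_nat (n choose i) * cis \<phi> ^ i * cis (- \<phi>) ^ (n - i) =
        of_nat (n choose i) * cis ((2 * real i - real n) * \<phi>)"
      by (simp add: mult.assoc)
  qed
  finally have "Re (complex_of_real ((2 * cos \<phi>)^n)) =
      Re (\<Sum>i\<le>n. of_nat (n choose i) * cis ((2 * real i - real n) * \<phi>))"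
    by (rule arg_cong)
  then show ?thesis
    by (simp add: Re_sum cis.sel)
qed

definition nat_dist :: "nat \<Rightarrow> nat \<Rightarrow> nat" where
  "nat_dist k i = nat \<bar>int k - int i\<bar>"

lemma cos_nat_dist: "cos (real (nat_dist k i) * (2 * \<phi>)) = cos ((2 * real i - real (2*k)) * \<phi>)"
proof (cases "i \<le> k")
  case True
  then have "real (nat_dist k i) * (2 * \<phi>) = - ((2 * real i - real (2*k)) * \<phi>)"
    by (simp add: nat_dist_def of_nat_diff algebra_simps)
  then show ?thesis
    by (metis cos_minus)
next
  case False
  then show ?thesis
    by (simp add: nat_dist_def of_nat_diff algebra_simps)
qed

lemma power_eq_cheb_poly_sum:
  assumes "0 \<le> x" "x \<le> 1"
  shows "x^k = (\<Sum>i\<le>2*k. real (2*k choose i) * poly (cheb_poly (nat_dist k i)) (2*x - 1)) / 4^k"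
proof -
  define \<phi> where "\<phi> = arccos (sqrt x)"
  have cos\<phi>: "cos \<phi> = sqrt x"
    using assms unfolding \<phi>_def by (intro cos_arccos) (auto intro: order_trans[of _ 0])
  have "x^k * 4^k = (2 * cos \<phi>)^(2*k)"
    using assms by (simp add: cos\<phi> power_mult_distrib power_mult)
  also have "\<dots> = (\<Sum>i\<le>2*k. real (2*k choose i) * poly (cheb_poly (nat_dist k i)) (2*x - 1))"
    unfolding two_cos_power
  proof (intro sum.cong refl)
    fix i
    have "2*x - 1 = cos (2*\<phi>)"
      using assms by (simp add: cos\<phi> cos_double_cos)
    then show "real (2*k choose i) * cos ((2 * real i - real (2*k)) * \<phi>) =
        real (2*k choose i) * poly (cheb_poly (nat_dist k i)) (2*x - 1)"
      by (simp add: poly_cheb_poly_cos cos_nat_dist)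
  qed
  finally show ?thesis
    by (simp add: field_simps)
qed

section \<open>Tail of the sine series\<close>

text \<open>By \<open>power_eq_cheb_poly_sum\<close>, \<open>high_cheb_weight d k\<close> is the total coefficient weight of the
  Chebyshev polynomials of degree \<open>\<ge> d\<close> in the expansion of \<open>x\<^sup>k\<close>.\<close>

definition high_cheb_weight :: "nat \<Rightarrow> nat \<Rightarrow> real" where
  "high_cheb_weight d k = (\<Sum>i | i \<le> 2*k \<and> d \<le> nat_dist k i. real (2*k choose i)) / 4^k"

lemma high_cheb_weight_eq_0: "k < d \<Longrightarrow> high_cheb_weight d k = 0"
  by (auto simp: high_cheb_weight_def nat_dist_def intro!: sum.neutral)

lemma fact_mult_power_le: "fact a * (a + 1)^j \<le> (fact (a + j) :: nat)"
proof (induction j)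
  case (Suc j)
  have "fact a * (a + 1)^Suc j = (a + 1) * (fact a * (a + 1)^j)"
    by (simp add: algebra_simps)
  also have "\<dots> \<le> (a + j + 1) * fact (a + j)"
    using Suc by (intro mult_mono) auto
  finally show ?case
    by (simp add: algebra_simps)
qed simp

lemma binomial_div_fact_le:
  assumes "1 \<le> d" "i \<le> j"
  shows "real (2*(d+j) choose i) / fact (2*(d+j)+1) \<le> (1/3)^j / fact (2*d+1)"
proof -
  define k where "k = d + j"
  have "fact (2*d) * 3^j \<le> fact (2*d) * (2*d+1)^j"
    using assms(1) by (intro mult_le_mono2 power_mono) auto
  also have "\<dots> \<le> fact (2*d+j)"
    by (rule fact_mult_power_le)
  also have "\<dots> \<le> fact (2*k - i)"
    using assms by (intro fact_mono) (simp add: k_def)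
  finally have "(2*d+1) * (fact (2*d) * 3^j) \<le> (2*k+1) * fact (2*k - i)"
    by (intro mult_le_mono) (auto simp: k_def)
  then have "(2*k choose i) * (fact (2*d+1) * 3^j) \<le> (2*k choose i) * ((2*k+1) * fact (2*k - i))"
    by (intro mult_le_mono2) (simp add: algebra_simps)
  also have "\<dots> = 1 * ((2*k+1) * fact (2*k - i) * (2*k choose i))"
    by (simp only: mult_1 ac_simps)
  also have "\<dots> \<le> fact i * ((2*k+1) * fact (2*k - i) * (2*k choose i))"
    by (rule mult_le_mono1[OF fact_ge_1])
  also have "\<dots> = (2*k+1) * (fact i * fact (2*k - i) * (2*k choose i))"
    by (simp only: ac_simps)
  also have "\<dots> = fact (2*k+1)"
    using assms(2) by (simp add: binomial_fact_lemma k_def)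
  finally have "real ((2*k choose i) * (fact (2*d+1) * 3^j)) \<le> real (fact (2*k+1))"
    by (simp only: of_nat_le_iff)
  then show ?thesis
    unfolding k_def[symmetric] by (simp add: field_simps power_one_over del: fact_Suc)
qed

lemma extreme_binomials_div_fact_le:
  assumes "1 \<le> d"
  shows "(\<Sum>i | i \<le> 2*(d+j) \<and> d \<le> nat_dist (d+j) i. real (2*(d+j) choose i)) / fact (2*(d+j)+1)
    \<le> 2 * (j+1) * (1/3)^j / fact (2*d+1)"
proof -
  define k where "k = d + j"
  define S where "S = {i. i \<le> 2*k \<and> d \<le> nat_dist k i}"
  have S: "S \<subseteq> {..j} \<union> (\<lambda>i. 2*k - i) ` {..j}"
  proof
    fix i assume "i \<in> S"
    then have "i \<le> j \<or> 2*k - i \<le> j"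
      by (auto simp: S_def k_def nat_dist_def)
    moreover have "i = 2*k - (2*k - i)"
      using \<open>i \<in> S\<close> by (simp add: S_def)
    ultimately show "i \<in> {..j} \<union> (\<lambda>i. 2*k - i) ` {..j}"
      by blast
  qed
  have "card S \<le> card ({..j} \<union> (\<lambda>i. 2*k - i) ` {..j})"
    using S by (intro card_mono) auto
  also have "\<dots> \<le> card {..j} + card ((\<lambda>i. 2*k - i) ` {..j})"
    by (rule card_Un_le)
  also have "\<dots> \<le> 2 * (j+1)"
    using card_image_le[of "{..j}" "\<lambda>i. 2*k - i"] by simp
  finally have cardS: "card S \<le> 2 * (j+1)" .
  have "real (2*k choose i) / fact (2*k+1) \<le> (1/3)^j / fact (2*d+1)" if "i \<in> S" for i
  proof (cases "i \<le> j")
    case True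
    then show ?thesis
      using binomial_div_fact_le[OF assms] by (simp add: k_def)
  next
    case False
    with that have "2*k - i \<le> j" "i \<le> 2*k"
      by (auto simp: S_def k_def nat_dist_def)
    then show ?thesis
      using binomial_div_fact_le[OF assms, of "2*k - i" j] binomial_symmetric[of i "2*k"]
      by (simp add: k_def)
  qed
  then have "(\<Sum>i\<in>S. real (2*k choose i) / fact (2*k+1)) \<le> card S * ((1/3)^j / fact (2*d+1))"
    by (rule sum_bounded_above)
  also have "\<dots> \<le> 2 * (j+1) * ((1/3)^j / fact (2*d+1))"
    using cardS by (intro mult_right_mono) auto
  finally show ?thesis
    by (simp add: S_def k_def sum_divide_distrib ac_simps)
qed

lemma sin_series_term_bound:
  assumes d: "1 \<le> d" and t: "0 \<le> t" "t \<le> 1" and a: "\<bar>a\<bar> \<le> high_cheb_weight d (d+j)"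
  shows "\<bar>(-1)^(d+j) / fact (2*(d+j)+1) * t^(2*(d+j)+1) * a\<bar>
    \<le> t^(2*d+1) * (2 / (4^d * fact (2*d+1)) * (1/6)^j)"
proof -
  have "\<bar>a\<bar> / fact (2*(d+j)+1) \<le> high_cheb_weight d (d+j) / fact (2*(d+j)+1)"
    using a by (simp add: divide_right_mono)
  also have "\<dots> \<le> 2 * (j+1) * (1/3)^j / fact (2*d+1) / 4^(d+j)"
    using extreme_binomials_div_fact_le[OF d, of j]
    by (simp add: high_cheb_weight_def divide_right_mono field_simps del: fact_Suc)
  also have "\<dots> = 2 / (4^d * fact (2*d+1)) * (real (j+1) * (1/12)^j)"
    by (simp add: power_add power_one_over field_simps del: fact_Suc flip: power_mult_distrib)
  also have "\<dots> \<le> 2 / (4^d * fact (2*d+1)) * (2^j * (1/12)^j)"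
  proof -
    have "j + 1 \<le> 2^j"
      by (metis Suc_eq_plus1 Suc_leI less_exp)
    then have "real (j+1) \<le> 2^j"
      by (metis of_nat_le_iff of_nat_numeral of_nat_power)
    then show ?thesis
      by (intro mult_left_mono mult_right_mono) auto
  qed
  also have "\<dots> = 2 / (4^d * fact (2*d+1)) * (1/6)^j"
    by (simp flip: power_mult_distrib)
  finally have a': "\<bar>a\<bar> / fact (2*(d+j)+1) \<le> 2 / (4^d * fact (2*d+1)) * (1/6)^j" .
  have "\<bar>(-1)^(d+j) / fact (2*(d+j)+1) * t^(2*(d+j)+1) * a\<bar> =
      t^(2*(d+j)+1) * (\<bar>a\<bar> / fact (2*(d+j)+1))"
    using t by (simp add: abs_mult power_abs)
  also have "\<dots> \<le> t^(2*d+1) * (2 / (4^d * fact (2*d+1)) * (1/6)^j)"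
    using a' t by (intro mult_mono power_decreasing) auto
  finally show ?thesis .
qed

lemma sin_series_tail_bound:
  assumes d: "1 \<le> d" and t: "0 \<le> t" "t \<le> 1" and a: "\<And>k. \<bar>a k\<bar> \<le> high_cheb_weight d k"
  defines "f \<equiv> \<lambda>k. (-1)^k / fact (2*k+1) * t^(2*k+1) * a k"
  shows "\<bar>suminf f\<bar> \<le> 16 * ((t/2)^(2*d+1) / fact (2*d+1))"
proof -
  define D where "D = t^(2*d+1) * (2 / (4^d * fact (2*d+1)))"
  define g where "g k = (if k < d then 0 else D * (1/6)^(k-d))" for k
  have fg: "\<bar>f k\<bar> \<le> g k" for k
  proof (cases "k < d")
    case True
    then show ?thesis
      using a[of k] by (simp add: f_def g_def high_cheb_weight_eq_0)
  next
    case False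
    then obtain j where "k = d + j"
      using le_Suc_ex not_less by blast
    then show ?thesis
      using sin_series_term_bound[OF d t a] by (simp add: f_def g_def D_def mult.assoc)
  qed
  have "(\<lambda>j. g (j + d)) = (\<lambda>j. D * (1/6)^j)"
    by (simp add: g_def)
  moreover have "(\<lambda>j. D * (1/6::real)^j) sums (D * (1 / (1 - 1/6)))"
    by (intro sums_mult geometric_sums) simp
  ultimately have "(\<lambda>j. g (j + d)) sums (D * (6/5))"
    by simp
  moreover have "(\<Sum>i<d. g i) = 0"
    by (simp add: g_def)
  ultimately have g: "g sums (D * (6/5))"
    using sums_iff_shift[of g d "D * (6/5)"] by simp
  have "\<bar>suminf f\<bar> \<le> suminf g"
    using norm_suminf_le[of f g] fg sums_summable[OF g] by simp
  also have "\<dots> = D * (6/5)"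
    using g by (rule sums_unique[symmetric])
  also have "\<dots> \<le> 4 * D"
  proof -
    have "0 \<le> D"
      using t by (simp add: D_def)
    then show ?thesis
      by simp
  qed
  also have "\<dots> = 16 * ((t/2)^(2*d+1) / fact (2*d+1))"
  proof -
    have "(2::real)^(2*d+1) = 2 * 4^d"
      by (simp add: power_add power_mult)
    then show ?thesis
      by (simp add: D_def power_divide)
  qed
  finally show ?thesis .
qed

section \<open>Tridiagonal matrices\<close>

definition idx_rank :: "'m::{finite,linorder} \<Rightarrow> nat" where
  "idx_rank a = card {x. x < a}"

lemma idx_rank_mono: "a \<le> d \<Longrightarrow> idx_rank a \<le> idx_rank d"
  unfolding idx_rank_def by (rule card_mono) auto

lemma idx_rank_first_idx: "idx_rank first_idx = 0"
proof -
  have "{x. x < first_idx} = {}"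
    by (auto simp: first_idx_def not_less intro: Min_le)
  then show ?thesis
    by (simp add: idx_rank_def)
qed

lemma idx_rank_last_idx: "idx_rank (last_idx :: 'm::{finite,linorder}) = CARD('m) - 1"
proof -
  have "{x::'m. x < last_idx} = UNIV - {last_idx}"
    unfolding last_idx_def by (auto simp: order.strict_iff_order intro: Max_ge)
  then show ?thesis
    by (simp add: idx_rank_def card_Diff_singleton)
qed

lemma tridiagonal_idx_rank_le:
  assumes "tridiagonal H" "H $ a $ d \<noteq> 0"
  shows "idx_rank a \<le> idx_rank d + 1"
proof (cases "a \<le> d")
  case True
  then show ?thesis
    using idx_rank_mono[OF True] by simp
next
  case False
  then have "\<not> (\<exists>k. d < k \<and> k < a)"
    using assms unfolding tridiagonal_def by blast
  then have "{x. x < a} \<subseteq> insert d {x. x < d}"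
    by (auto dest: linorder_neqE)
  then have "idx_rank a \<le> card (insert d {x. x < d})"
    unfolding idx_rank_def by (intro card_mono) auto
  then show ?thesis
    by (simp add: idx_rank_def card_insert_if)
qed

lemma tridiagonal_mpow_entry_nonzero:
  assumes "tridiagonal H"
  shows "mpow H j $ a $ c \<noteq> 0 \<Longrightarrow> idx_rank a \<le> idx_rank c + j"
proof (induction j arbitrary: a)
  case 0
  then show ?case
    by (simp add: mat_def split: if_splits)
next
  case (Suc j)
  then have "(\<Sum>d\<in>UNIV. H $ a $ d * mpow H j $ d $ c) \<noteq> 0"
    by (simp add: mpow_Suc matrix_matrix_mult_def)
  then obtain d where "H $ a $ d * mpow H j $ d $ c \<noteq> 0"
    by (rule sum.not_neutral_contains_not_neutral)
  then have "H $ a $ d \<noteq> 0" "mpow H j $ d $ c \<noteq> 0"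
    by simp_all
  from tridiagonal_idx_rank_le[OF assms this(1)] Suc.IH[OF this(2)] show ?case
    by linarith
qed

lemma tridiagonal_mpow_corner_eq_0:
  fixes H :: "real^('m::{finite,linorder})^('m::{finite,linorder})"
  assumes "tridiagonal H" "j < CARD('m) - 1"
  shows "mpow H j $ last_idx $ first_idx = 0"
  using tridiagonal_mpow_entry_nonzero[OF assms(1), of j last_idx first_idx] assms(2)
  by (auto simp: idx_rank_first_idx idx_rank_last_idx)

lemma tridiagonal_corner_poly_eq_0:
  fixes H :: "real^('m::{finite,linorder})^('m::{finite,linorder})"
  assumes "tridiagonal H" "orthonormal_eigenbasis H B \<mu>" "degree p < CARD('m) - 1"
  shows "(\<Sum>b\<in>B. b$last_idx * b$first_idx * poly p (\<mu> b)) = 0"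
  using assms by (simp add: orthonormal_eigenbasis_entry_poly tridiagonal_mpow_corner_eq_0)

lemma tridiagonal_corner_mpow_bound:
  fixes H :: "real^('m::{finite,linorder})^('m::{finite,linorder})"
  assumes tri: "tridiagonal H" and B: "orthonormal_eigenbasis H B \<mu>"
    and \<mu>: "\<And>b. b \<in> B \<Longrightarrow> 0 \<le> \<mu> b \<and> \<mu> b \<le> 1"
  shows "\<bar>mpow H k $ last_idx $ first_idx\<bar> \<le> high_cheb_weight (CARD('m) - 1) k"
proof -
  \<comment> \<open>P e is the corner entry of T_e(2H - I).\<close>
  define P where "P e = (\<Sum>b\<in>B. b$last_idx * b$first_idx * poly (cheb_poly e) (2 * \<mu> b - 1))" for e
  define S where "S = {i. i \<le> 2*k \<and> CARD('m) - 1 \<le> nat_dist k i}"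
  have P0: "P e = 0" if "e < CARD('m) - 1" for e
  proof -
    have "degree (cheb_poly e \<circ>\<^sub>p [:-1, 2:]) < CARD('m) - 1"
      using degree_cheb_poly_le[of e] that by (simp add: degree_pcompose)
    from tridiagonal_corner_poly_eq_0[OF tri B this] show ?thesis
      by (simp add: P_def poly_pcompose algebra_simps)
  qed
  have P1: "\<bar>P e\<bar> \<le> 1" for e
    unfolding P_def
    by (intro abs_orthonormal_eigenbasis_entry_sum_le_1[OF B] abs_poly_cheb_poly_le_1)
      (use \<mu> in \<open>fastforce simp: abs_le_iff\<close>)
  have "mpow H k $ last_idx $ first_idx =
      (\<Sum>b\<in>B. b$last_idx * b$first_idx * ((\<Sum>i\<le>2*k. real (2*k choose i) *
         poly (cheb_poly (nat_dist k i)) (2 * \<mu> b - 1)) / 4^k))"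
    unfolding mpow_entry_orthonormal_eigenbasis[OF B] using \<mu>
    by (intro sum.cong refl) (simp add: power_eq_cheb_poly_sum)
  also have "\<dots> = (\<Sum>i\<le>2*k. real (2*k choose i) * P (nat_dist k i)) / 4^k"
    by (simp add: P_def sum_distrib_left sum_divide_distrib ac_simps sum.swap[of _ B])
  also have "\<dots> = (\<Sum>i\<in>S. real (2*k choose i) * P (nat_dist k i)) / 4^k"
    using P0 by (intro arg_cong[of _ _ "\<lambda>x. x / 4^k"] sum.mono_neutral_right)
      (auto simp: S_def simp flip: not_less)
  finally have "\<bar>mpow H k $ last_idx $ first_idx\<bar> \<le> (\<Sum>i\<in>S. real (2*k choose i) * \<bar>P (nat_dist k i)\<bar>) / 4^k"
    by (simp add: divide_right_mono order_trans[OF sum_abs] abs_mult)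
  also have "\<dots> \<le> (\<Sum>i\<in>S. real (2*k choose i)) / 4^k"
    using P1 by (intro divide_right_mono sum_mono mult_right_le_one_le) auto
  finally show ?thesis
    by (simp add: high_cheb_weight_def S_def)
qed

section \<open>The Lanczos relation\<close>

lemma outer_last_mult_vector: "outer_last u *v x = (x $ last_idx) *\<^sub>R u"
proof -
  have "(\<Sum>j\<in>UNIV. (if j = last_idx then u$i else 0) * x$j) = x $ last_idx * u$i" for i
    by (simp add: if_distrib[of "\<lambda>y. y * _"] cong: if_cong)
  then show ?thesis
    by (simp add: vec_eq_iff outer_last_def matrix_vector_mult_def)
qed

lemma lanczos_ritz_values_bounded:
  fixes A :: "real^'n^'n" and V :: "real^'m^'n"
  assumes symA: "transpose A = A" and spec: "\<And>l. is_eigenvalue A l \<Longrightarrow> 0 \<le> l \<and> l \<le> 1"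
    and orth: "transpose V ** V = mat 1" and Hdef: "H = transpose V ** A ** V"
    and B: "orthonormal_eigenbasis H B \<mu>" and b: "b \<in> B"
  shows "0 \<le> \<mu> b \<and> \<mu> b \<le> 1"
proof -
  have "b \<bullet> b = 1" and "H *v b = \<mu> b *\<^sub>R b"
    using B b by (auto simp: orthonormal_eigenbasis_def norm_eq_1)
  moreover have "(V *v b) \<bullet> (V *v b) = b \<bullet> b"
    by (simp add: inner_matrix_vector_transpose matrix_vector_mul_assoc orth)
  moreover have "(V *v b) \<bullet> (A *v (V *v b)) = b \<bullet> (H *v b)"
    by (simp add: inner_matrix_vector_transpose Hdef matrix_vector_mul_assoc matrix_mul_assoc)
  ultimately show ?thesis
    using unit_interval_spectrum_bounds(1,2)[OF symA spec, of "V *v b"] by simp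
qed

lemma lanczos_subdiagonal_le_1:
  fixes A :: "real^'n^'n" and V :: "real^('m::{finite,linorder})^'n"
  assumes symA: "transpose A = A" and spec: "\<And>l. is_eigenvalue A l \<Longrightarrow> 0 \<le> l \<and> l \<le> 1"
    and orth: "transpose V ** V = mat 1" and nw: "norm w = 1" and worth: "transpose V *v w = 0"
    and arnoldi: "A ** V = V ** H + h *\<^sub>R outer_last w"
  shows "h \<le> 1"
proof -
  define x where "x = V *v axis last_idx 1"
  have "A *v x = V *v (H *v axis last_idx 1) + h *\<^sub>R w"
    using arg_cong[OF arnoldi, of "\<lambda>M. M *v axis last_idx 1"]
    by (simp add: x_def matrix_vector_mult_add_rdistrib matrix_vector_mul_assoc
        scaleR_matrix_vector_assoc[symmetric] outer_last_mult_vector)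
  moreover have "w \<bullet> (V *v y) = 0" for y
    using inner_matrix_vector_transpose[of V y w] worth by (simp add: inner_commute)
  ultimately have "h = w \<bullet> (A *v x)"
    using nw by (simp add: inner_add_right norm_eq_1)
  also have "\<dots> \<le> norm (A *v x)"
    using norm_cauchy_schwarz[of w "A *v x"] nw by simp
  also have "\<dots> \<le> norm x"
    by (rule unit_interval_spectrum_bounds(3)[OF symA spec])
  also have "norm x = 1"
    by (simp add: x_def norm_eq_sqrt_inner inner_matrix_vector_transpose matrix_vector_mul_assoc orth)
  finally show ?thesis .
qed

lemma has_vector_derivative_scaleR_const:
  "(f has_real_derivative f') (at t) \<Longrightarrow> ((\<lambda>s. f s *\<^sub>R c) has_vector_derivative f' *\<^sub>R c) (at t)"
  using has_vector_derivative_scaleR[of f f' t UNIV "\<lambda>_. c" 0] by simp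

lemma lanczos_residual_eq:
  fixes A :: "real^'n^'n" and V :: "real^('m::{finite,linorder})^'n"
    and y r :: "real \<Rightarrow> real^'n"
  assumes arnoldi: "A ** V = V ** H + h *\<^sub>R outer_last w"
    and B: "orthonormal_eigenbasis H B \<mu>" and \<mu>: "\<And>b. b \<in> B \<Longrightarrow> 0 \<le> \<mu> b"
    and ydef: "\<And>t. y t = V *v ((t *\<^sub>R mat_sigma ((t^2) *\<^sub>R H)) *v axis first_idx 1)"
    and rdef: "\<And>t. r t = - (A *v y t) - vector_derivative (\<lambda>s. vector_derivative y (at s)) (at t)"
  shows "r t = - (h * (\<Sum>b\<in>B. b$last_idx * b$first_idx * sin_sqrt (\<mu> b) t)) *\<^sub>R w"
proof -
  define u where "u b = (b $ first_idx) *\<^sub>R (V *v b)" for b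
  have fin: "finite B"
    using B by (simp add: orthonormal_eigenbasis_def)
  have y: "y = (\<lambda>s. \<Sum>b\<in>B. sin_sqrt (\<mu> b) s *\<^sub>R u b)"
    by (simp add: fun_eq_iff ydef scaled_mat_sigma_orthonormal_eigenbasis[OF B \<mu>] sum_matrix_vector_mult[OF fin]
        outer_prod_mult_vector inner_axis vec.sum matrix_vector_mult_scaleR u_def
        flip: scaleR_matrix_vector_assoc)
  have "(y has_vector_derivative (\<Sum>b\<in>B. cos (s * sqrt (\<mu> b)) *\<^sub>R u b)) (at s)" for s
    unfolding y by (intro has_vector_derivative_sum has_vector_derivative_scaleR_const
        has_real_derivative_sin_sqrt \<mu>)
  then have y': "(\<lambda>s. vector_derivative y (at s)) = (\<lambda>s. \<Sum>b\<in>B. cos (s * sqrt (\<mu> b)) *\<^sub>R u b)"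
    using vector_derivative_at by blast
  have y'': "vector_derivative (\<lambda>s. vector_derivative y (at s)) (at t) =
      (\<Sum>b\<in>B. (- \<mu> b * sin_sqrt (\<mu> b) t) *\<^sub>R u b)"
    unfolding y' by (intro vector_derivative_at has_vector_derivative_sum
        has_vector_derivative_scaleR_const has_real_derivative_cos_sqrt \<mu>)
  have Au: "A *v u b = \<mu> b *\<^sub>R u b + (h * b$last_idx * b$first_idx) *\<^sub>R w" if "b \<in> B" for b
  proof -
    have "A *v (V *v b) = (V ** H + h *\<^sub>R outer_last w) *v b"
      by (simp add: arnoldi matrix_vector_mul_assoc)
    also have "\<dots> = \<mu> b *\<^sub>R (V *v b) + (h * b$last_idx) *\<^sub>R w"
      using B that by (simp add: matrix_vector_mult_add_rdistrib orthonormal_eigenbasis_def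
          outer_last_mult_vector matrix_vector_mult_scaleR flip: matrix_vector_mul_assoc
          scaleR_matrix_vector_assoc)
    finally show ?thesis
      by (simp add: u_def matrix_vector_mult_scaleR algebra_simps)
  qed
  have "r t = (\<Sum>b\<in>B. - (sin_sqrt (\<mu> b) t *\<^sub>R (A *v u b)) + (\<mu> b * sin_sqrt (\<mu> b) t) *\<^sub>R u b)"
    unfolding rdef y'' by (simp add: y vec.sum matrix_vector_mult_scaleR sum_subtractf sum_negf)
  also have "\<dots> = (\<Sum>b\<in>B. (- (h * (b$last_idx * b$first_idx * sin_sqrt (\<mu> b) t))) *\<^sub>R w)"
    by (intro sum.cong refl) (simp add: Au algebra_simps)
  finally show ?thesis
    by (simp add: sum_distrib_left scaleR_sum_left sum_negf)
qed

theorem proposition3p4: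
  fixes A :: "real^'n^'n"
    and v w :: "real^'n"
    and V :: "real^('m::{finite,linorder})^'n"
    and H :: "real^('m::{finite,linorder})^('m::{finite,linorder})"
    and h :: real
    and y r :: "real \<Rightarrow> real^'n"
  assumes symA: "transpose A = A"
    and spec: "\<And>l. is_eigenvalue A l \<Longrightarrow> 0 \<le> l \<and> l \<le> 1"
    and nv: "norm v = 1"
    and m2: "CARD('m) \<ge> 2"
    and orth: "transpose V ** V = mat 1"
    and col1: "column first_idx V = v"
    and nw: "norm w = 1"
    and worth: "transpose V *v w = 0"
    and Hdef: "H = transpose V ** A ** V"
    and symH: "transpose H = H"
    and tri: "tridiagonal H"
    and hpos: "h \<ge> 0"
    and arnoldi: "A ** V = V ** H + h *\<^sub>R outer_last w"
    and ydef: "\<And>t. y t = V *v ((t *\<^sub>R mat_sigma ((t^2) *\<^sub>R H)) *v axis first_idx 1)"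
    and rdef: "\<And>t. r t = - (A *v y t)
                 - vector_derivative (\<lambda>s. vector_derivative y (at s)) (at t)"
  shows "\<forall>t. 0 \<le> t \<and> t \<le> 1 \<longrightarrow>
           norm (r t) \<le> 16 * ((t/2)^(2*CARD('m)-1) / fact (2*CARD('m)-1))"
proof (intro allI impI)
  fix t :: real
  assume t: "0 \<le> t \<and> t \<le> 1"
  obtain B \<mu> where B: "orthonormal_eigenbasis H B \<mu>"
    using symmetric_matrix_orthonormal_eigenbasis[OF symH] .
  have \<mu>: "0 \<le> \<mu> b \<and> \<mu> b \<le> 1" if "b \<in> B" for b
    using lanczos_ritz_values_bounded[OF symA spec orth Hdef B that] .
  define c where "c = (\<Sum>b\<in>B. b$last_idx * b$first_idx * sin_sqrt (\<mu> b) t)"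
  define d where "d = CARD('m) - 1"
  have d: "1 \<le> d" "2 * CARD('m) - 1 = 2*d + 1"
    using m2 by (auto simp: d_def)
  have series: "(\<lambda>k. (-1)^k / fact (2*k+1) * t^(2*k+1) * mpow H k $ last_idx $ first_idx) sums c"
    unfolding c_def using B \<mu> by (intro sin_sqrt_entry_sums) auto
  have corner: "\<bar>mpow H k $ last_idx $ first_idx\<bar> \<le> high_cheb_weight d k" for k
    unfolding d_def using tri B \<mu> by (rule tridiagonal_corner_mpow_bound)
  have "r t = - (h * c) *\<^sub>R w"
    unfolding c_def by (rule lanczos_residual_eq[OF arnoldi B _ ydef rdef]) (simp add: \<mu>)
  then have "norm (r t) = h * \<bar>c\<bar>"
    using nw hpos by (simp add: abs_mult)
  also have "\<dots> \<le> \<bar>c\<bar>"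
    using lanczos_subdiagonal_le_1[OF symA spec orth nw worth arnoldi] hpos
    by (simp add: mult_left_le_one_le)
  also have "\<dots> \<le> 16 * ((t/2)^(2*d+1) / fact (2*d+1))"
    unfolding sums_unique[OF series] using t by (intro sin_series_tail_bound[OF d(1)] corner) auto
  finally show "norm (r t) \<le> 16 * ((t/2)^(2*CARD('m)-1) / fact (2*CARD('m)-1))"
    by (simp only: d(2))
qed

end
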